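(* Let $(W,R)$ be an $L5$-frame, let $g\colon V\to\mathrm{Pow}(W)$ be an assignment in $(W,R)$, and let $w_T\in W$ be an $R$-maximal element of $W$. Then there exist an $L5$-model $\mathcal{M}$ and an assignment $\gamma\colon V\to M$ such that for all formulas $\varphi$: $$(\mathcal{M},\gamma)\vDash\varphi\iff (w_T,g)\vDash\varphi.$$
   Context: Formulas are built from a countable set $V$ of propositional variables using $\wedge,\vee,\rightarrow,\bot$ and the unary modal operator $\square$; $\top$ abbreviates $\bot\rightarrow\bot$. An $L5$-frame is a pair $(W,R)$ with the following properties: - $W$ is a non-empty set; - $R$ is a partial order on $W$; - there is an $R$-smallest element $w_B$ (the bottom world); - every $R$-chain has an upper bound in $W$. An assignment in $(W,R)$ is a map $g\colon V\to\mathrm{Pow}(W)$ with $wRw'$ and $w\in g(x)$ implying $w'\in g(x)$. Kripke satisfaction is defined as follows: - $(w,g)\nvDash\bot$; - $(w,g)\vDash x$ iff $w\in g(x)$; - $\vee,\wedge$ are evaluated pointwise; - $(w,g)\vDash\varphi\rightarrow\psi$ iff for all $w'$ with $wRw'$, $(w',g)\vDash\varphi$ implies $(w',g)\vDash\psi$; - $(w,g)\vDash\square\varphi$ iff $(w_B,g)\vDash\varphi$. An $L5$-model is a structure $\mathcal{M}=(M,\mathit{TRUE},f_\bot,f_\top,f_\rightarrow,f_\vee,f_\wedge,f_\square)$ such that $(M,f_\bot,f_\top,f_\rightarrow,f_\vee,f_\wedge)$ is a Heyting algebra (lattice order $\le$). Moreover, $\mathit{TRUE}\subseteq M$ is an ultrafilter,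 and $f_\square\colon M\to M$ satisfies, for all $m,m',m''\in M$: (i) $f_\square(m)\le m$; (ii) $f_\square(f_\rightarrow(m,m'))\le f_\rightarrow(f_\square(f_\rightarrow(m',m'')),f_\square(f_\rightarrow(m,m'')))$; (iii) $f_\square(f_\vee(m,m'))\le f_\vee(f_\square(m),f_\square(m'))$; (iv) $f_\square(m)\in\mathit{TRUE}$ iff $m=f_\top$; (v) $f_\square(m)=f_\top$ if $m=f_\top$, and $f_\square(m)=f_\bot$ otherwise. An assignment $\gamma\colon V\to M$ extends to all formulas by: - $\gamma(\bot)=f_\bot$; - $\gamma(\square\varphi)=f_\square(\gamma(\varphi))$; - $\gamma(\varphi*\psi)=f_*(\gamma(\varphi),\gamma(\psi))$ for $*\in\{\vee,\wedge,\rightarrow\}$. Satisfaction is $(\mathcal{M},\gamma)\vDash\varphi$ iff $\gamma(\varphi)\in\mathit{TRUE}$. *)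

theory Defs
  imports Main "HOL-Library.Countable"
begin

datatype 'v form =
    Var 'v
  | Bot
  | And "'v form" "'v form"
  | Or "'v form" "'v form"
  | Imp "'v form" "'v form"
  | Box "'v form"

definition Top :: "'v form" where "Top = Imp Bot Bot"

definition l5_frame :: "'w set \<Rightarrow> ('w \<Rightarrow> 'w \<Rightarrow> bool) \<Rightarrow> bool" where
  "l5_frame W R \<longleftrightarrow>
     W \<noteq> {} \<and>
     (\<forall>x y. R x y \<longrightarrow> x \<in> W \<and> y \<in> W) \<and>
     (\<forall>x\<in>W. R x x) \<and>
     (\<forall>x y z. R x y \<longrightarrow> R y z \<longrightarrow> R x z) \<and>
     (\<forall>x y. R x y \<longrightarrow> R y x \<longrightarrow> x = y) \<and>
     (\<exists>b\<in>W. \<forall>w\<in>W. R b w) \<and>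
     (\<forall>C. C \<subseteq> W \<longrightarrow> (\<forall>x\<in>C. \<forall>y\<in>C. R x y \<or> R y x) \<longrightarrow>
        (\<exists>u\<in>W. \<forall>x\<in>C. R x u))"

definition bottom_world :: "'w set \<Rightarrow> ('w \<Rightarrow> 'w \<Rightarrow> bool) \<Rightarrow> 'w" where
  "bottom_world W R = (THE b. b \<in> W \<and> (\<forall>w\<in>W. R b w))"

definition frame_assignment ::
  "'w set \<Rightarrow> ('w \<Rightarrow> 'w \<Rightarrow> bool) \<Rightarrow> ('v \<Rightarrow> 'w set) \<Rightarrow> bool" where
  "frame_assignment W R g \<longleftrightarrow>
     (\<forall>x. g x \<subseteq> W) \<and> (\<forall>x w w'. R w w' \<longrightarrow> w \<in> g x \<longrightarrow> w' \<in> g x)"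

fun ksat :: "'w set \<Rightarrow> ('w \<Rightarrow> 'w \<Rightarrow> bool) \<Rightarrow> ('v \<Rightarrow> 'w set) \<Rightarrow> 'w \<Rightarrow> 'v form \<Rightarrow> bool" where
  "ksat W R g w Bot = False"
| "ksat W R g w (Var x) = (w \<in> g x)"
| "ksat W R g w (And \<phi> \<psi>) = (ksat W R g w \<phi> \<and> ksat W R g w \<psi>)"
| "ksat W R g w (Or \<phi> \<psi>) = (ksat W R g w \<phi> \<or> ksat W R g w \<psi>)"
| "ksat W R g w (Imp \<phi> \<psi>) =
     (\<forall>w'. R w w' \<longrightarrow> ksat W R g w' \<phi> \<longrightarrow> ksat W R g w' \<psi>)"
| "ksat W R g w (Box \<phi>) = ksat W R g (bottom_world W R) \<phi>"

definition r_maximal :: "'w set \<Rightarrow> ('w \<Rightarrow> 'w \<Rightarrow> bool) \<Rightarrow> 'w \<Rightarrow> bool" where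
  "r_maximal W R wT \<longleftrightarrow> wT \<in> W \<and> (\<forall>w\<in>W. R wT w \<longrightarrow> w = wT)"

definition hle :: "('m \<Rightarrow> 'm \<Rightarrow> 'm) \<Rightarrow> 'm \<Rightarrow> 'm \<Rightarrow> bool" where
  "hle fand a b \<longleftrightarrow> fand a b = a"

definition heyting_algebra ::
  "'m set \<Rightarrow> 'm \<Rightarrow> 'm \<Rightarrow> ('m \<Rightarrow> 'm \<Rightarrow> 'm) \<Rightarrow> ('m \<Rightarrow> 'm \<Rightarrow> 'm) \<Rightarrow> ('m \<Rightarrow> 'm \<Rightarrow> 'm) \<Rightarrow> bool" where
  "heyting_algebra M fbot ftop fimp for fand \<longleftrightarrow>
     fbot \<in> M \<and> ftop \<in> M \<and>
     (\<forall>a\<in>M. \<forall>b\<in>M. fimp a b \<in> M \<and> for a b \<in> M \<and> fand a b \<in> M) \<and>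
     (\<forall>a\<in>M. \<forall>b\<in>M. for a b = for b a \<and> fand a b = fand b a) \<and>
     (\<forall>a\<in>M. \<forall>b\<in>M. \<forall>c\<in>M. for (for a b) c = for a (for b c) \<and>
                              fand (fand a b) c = fand a (fand b c)) \<and>
     (\<forall>a\<in>M. \<forall>b\<in>M. for a (fand a b) = a \<and> fand a (for a b) = a) \<and>
     (\<forall>a\<in>M. hle fand fbot a \<and> hle fand a ftop) \<and>
     (\<forall>a\<in>M. \<forall>b\<in>M. \<forall>c\<in>M. hle fand (fand a b) c \<longleftrightarrow> hle fand a (fimp b c))"

definition hfilter :: "'m set \<Rightarrow> 'm \<Rightarrow> ('m \<Rightarrow> 'm \<Rightarrow> 'm) \<Rightarrow> 'm set \<Rightarrow> bool" where
  "hfilter M ftop fand F \<longleftrightarrow>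
     F \<subseteq> M \<and> ftop \<in> F \<and>
     (\<forall>a\<in>F. \<forall>b\<in>F. fand a b \<in> F) \<and>
     (\<forall>a\<in>F. \<forall>b\<in>M. hle fand a b \<longrightarrow> b \<in> F)"

definition ultrafilter ::
  "'m set \<Rightarrow> 'm \<Rightarrow> 'm \<Rightarrow> ('m \<Rightarrow> 'm \<Rightarrow> 'm) \<Rightarrow> 'm set \<Rightarrow> bool" where
  "ultrafilter M fbot ftop fand U \<longleftrightarrow>
     hfilter M ftop fand U \<and> fbot \<notin> U \<and>
     (\<forall>F. hfilter M ftop fand F \<longrightarrow> fbot \<notin> F \<longrightarrow> U \<subseteq> F \<longrightarrow> F = U)"

definition l5_model ::
  "'m set \<Rightarrow> 'm set \<Rightarrow> 'm \<Rightarrow> 'm \<Rightarrow> ('m \<Rightarrow> 'm \<Rightarrow> 'm) \<Rightarrow> ('m \<Rightarrow> 'm \<Rightarrow> 'm)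
    \<Rightarrow> ('m \<Rightarrow> 'm \<Rightarrow> 'm) \<Rightarrow> ('m \<Rightarrow> 'm) \<Rightarrow> bool" where
  "l5_model M TRUE fbot ftop fimp for fand fbox \<longleftrightarrow>
     heyting_algebra M fbot ftop fimp for fand \<and>
     ultrafilter M fbot ftop fand TRUE \<and>
     (\<forall>m\<in>M. fbox m \<in> M) \<and>
     (\<forall>m\<in>M. hle fand (fbox m) m) \<and>
     (\<forall>m\<in>M. \<forall>m'\<in>M. \<forall>m''\<in>M.
        hle fand (fbox (fimp m m')) (fimp (fbox (fimp m' m'')) (fbox (fimp m m'')))) \<and>
     (\<forall>m\<in>M. \<forall>m'\<in>M. hle fand (fbox (for m m')) (for (fbox m) (fbox m'))) \<and>
     (\<forall>m\<in>M. fbox m \<in> TRUE \<longleftrightarrow> m = ftop) \<and>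
     (\<forall>m\<in>M. fbox m = (if m = ftop then ftop else fbot))"

fun meval :: "'m \<Rightarrow> ('m \<Rightarrow> 'm \<Rightarrow> 'm) \<Rightarrow> ('m \<Rightarrow> 'm \<Rightarrow> 'm) \<Rightarrow> ('m \<Rightarrow> 'm \<Rightarrow> 'm)
    \<Rightarrow> ('m \<Rightarrow> 'm) \<Rightarrow> ('v \<Rightarrow> 'm) \<Rightarrow> 'v form \<Rightarrow> 'm" where
  "meval fbot fimp for fand fbox \<gamma> Bot = fbot"
| "meval fbot fimp for fand fbox \<gamma> (Var x) = \<gamma> x"
| "meval fbot fimp for fand fbox \<gamma> (Box \<phi>) = fbox (meval fbot fimp for fand fbox \<gamma> \<phi>)"
| "meval fbot fimp for fand fbox \<gamma> (And \<phi> \<psi>) =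
     fand (meval fbot fimp for fand fbox \<gamma> \<phi>) (meval fbot fimp for fand fbox \<gamma> \<psi>)"
| "meval fbot fimp for fand fbox \<gamma> (Or \<phi> \<psi>) =
     for (meval fbot fimp for fand fbox \<gamma> \<phi>) (meval fbot fimp for fand fbox \<gamma> \<psi>)"
| "meval fbot fimp for fand fbox \<gamma> (Imp \<phi> \<psi>) =
     fimp (meval fbot fimp for fand fbox \<gamma> \<phi>) (meval fbot fimp for fand fbox \<gamma> \<psi>)"

end

theory Submission
  imports Defs
begin

text \<open>The truth sets of formulas are R-up-sets of W (persistence), and the up-sets form a
  Heyting algebra. Sets containing the maximal world wT form an ultrafilter, since the
  singleton of wT is itself an up-set. Box is the two-valued map sending W to W and every
  other up-set to the empty set; it satisfies the box axioms because an up-set containing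
  the bottom world is all of W. The value of a formula is then its truth set, which lies in
  the ultrafilter exactly when wT forces the formula.\<close>

definition up_sets :: "'w set \<Rightarrow> ('w \<Rightarrow> 'w \<Rightarrow> bool) \<Rightarrow> 'w set set" where
  "up_sets W R = {A. A \<subseteq> W \<and> (\<forall>w w'. R w w' \<longrightarrow> w \<in> A \<longrightarrow> w' \<in> A)}"

definition up_imp :: "'w set \<Rightarrow> ('w \<Rightarrow> 'w \<Rightarrow> bool) \<Rightarrow> 'w set \<Rightarrow> 'w set \<Rightarrow> 'w set" where
  "up_imp W R A B = {w \<in> W. \<forall>w'. R w w' \<longrightarrow> w' \<in> A \<longrightarrow> w' \<in> B}"

definition box_top :: "'w set \<Rightarrow> 'w set \<Rightarrow> 'w set" where
  "box_top W A = (if A = W then W else {})"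

definition extension ::
  "'w set \<Rightarrow> ('w \<Rightarrow> 'w \<Rightarrow> bool) \<Rightarrow> ('v \<Rightarrow> 'w set) \<Rightarrow> 'v form \<Rightarrow> 'w set" where
  "extension W R g \<phi> = {w \<in> W. ksat W R g w \<phi>}"

lemma hle_Int_iff_subset [simp]: "hle (\<inter>) A B \<longleftrightarrow> A \<subseteq> B"
  unfolding hle_def by auto

locale preorder_frame =
  fixes W :: "'w set" and R :: "'w \<Rightarrow> 'w \<Rightarrow> bool"
  assumes field: "R x y \<Longrightarrow> x \<in> W \<and> y \<in> W"
    and refl: "x \<in> W \<Longrightarrow> R x x"
    and trans: "R x y \<Longrightarrow> R y z \<Longrightarrow> R x z"

lemma l5_frame_preorder_frame: "l5_frame W R \<Longrightarrow> preorder_frame W R"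
  unfolding l5_frame_def preorder_frame_def by (elim conjE) (intro conjI allI impI; blast)

lemma l5_frame_bottom_world:
  assumes "l5_frame W R"
  shows "bottom_world W R \<in> W" and "\<forall>w\<in>W. R (bottom_world W R) w"
proof -
  have anti: "\<And>x y. R x y \<Longrightarrow> R y x \<Longrightarrow> x = y"
    using assms unfolding l5_frame_def by (elim conjE) blast
  obtain b where b: "b \<in> W" "\<forall>w\<in>W. R b w"
    using assms unfolding l5_frame_def by (elim conjE) blast
  have "bottom_world W R = b"
    unfolding bottom_world_def by (rule the_equality) (use b anti in blast)+
  with b show "bottom_world W R \<in> W" and "\<forall>w\<in>W. R (bottom_world W R) w" by simp_all
qed

context preorder_frame
begin

lemma ksat_persistent:
  assumes "frame_assignment W R g"
  shows "R w w' \<Longrightarrow> ksat W R g w \<phi> \<Longrightarrow> ksat W R g w' \<phi>"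
proof (induction \<phi> arbitrary: w w')
  case (Var x)
  then show ?case using assms unfolding frame_assignment_def by simp
next
  case (Imp \<phi> \<psi>)
  then show ?case using trans by simp
next
  case (Or \<phi> \<psi>)
  then show ?case by (simp only: ksat.simps) blast
qed simp_all

lemma extension_in_up_sets:
  assumes "frame_assignment W R g"
  shows "extension W R g \<phi> \<in> up_sets W R"
  using ksat_persistent[OF assms] field unfolding extension_def up_sets_def by blast

lemma r_maximal_singleton_up_set: "r_maximal W R wT \<Longrightarrow> {wT} \<in> up_sets W R"
  unfolding r_maximal_def up_sets_def using field by blast

lemma up_set_containing_bottom:
  assumes "\<forall>w\<in>W. R b w" and "A \<in> up_sets W R" and "b \<in> A"
  shows "A = W"
  using assms unfolding up_sets_def by blast

lemma up_imp_in_up_sets: "up_imp W R A B \<in> up_sets W R"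
  unfolding up_imp_def up_sets_def using field trans by blast

lemma up_sets_Int_subset_iff:
  assumes "A \<in> up_sets W R"
  shows "A \<inter> C \<subseteq> D \<longleftrightarrow> A \<subseteq> up_imp W R C D"
  using assms refl trans unfolding up_sets_def up_imp_def by blast

lemma heyting_algebra_up_sets: "heyting_algebra (up_sets W R) {} W (up_imp W R) (\<union>) (\<inter>)"
  unfolding heyting_algebra_def hle_Int_iff_subset
proof (intro conjI ballI)
  show "{} \<in> up_sets W R" "W \<in> up_sets W R"
    using field unfolding up_sets_def by auto
  fix A B C assume A: "A \<in> up_sets W R" and B: "B \<in> up_sets W R" and C: "C \<in> up_sets W R"
  show "up_imp W R A B \<in> up_sets W R" by (rule up_imp_in_up_sets)
  show "A \<union> B \<in> up_sets W R" "A \<inter> B \<in> up_sets W R" "A \<subseteq> W"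
    using A B unfolding up_sets_def by blast+
  show "A \<inter> B \<subseteq> C \<longleftrightarrow> A \<subseteq> up_imp W R B C" using A by (rule up_sets_Int_subset_iff)
qed blast+

lemma ultrafilter_principal_up_sets:
  assumes wT: "{wT} \<in> up_sets W R"
  shows "ultrafilter (up_sets W R) {} W (\<inter>) {A \<in> up_sets W R. wT \<in> A}"
  unfolding ultrafilter_def hfilter_def hle_Int_iff_subset
proof (intro conjI allI impI)
  show "W \<in> {A \<in> up_sets W R. wT \<in> A}"
    using wT field unfolding up_sets_def by auto
  show "\<forall>A\<in>{A \<in> up_sets W R. wT \<in> A}. \<forall>B\<in>{A \<in> up_sets W R. wT \<in> A}.
      A \<inter> B \<in> {A \<in> up_sets W R. wT \<in> A}"
    unfolding up_sets_def by blast
next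
  fix F assume "F \<subseteq> up_sets W R \<and> W \<in> F \<and> (\<forall>A\<in>F. \<forall>B\<in>F. A \<inter> B \<in> F)
      \<and> (\<forall>A\<in>F. \<forall>B\<in>up_sets W R. A \<subseteq> B \<longrightarrow> B \<in> F)"
  then have F_sub: "F \<subseteq> up_sets W R" and F_Int: "\<And>A B. A \<in> F \<Longrightarrow> B \<in> F \<Longrightarrow> A \<inter> B \<in> F"
    by simp_all
  assume proper: "{} \<notin> F" and sub: "{A \<in> up_sets W R. wT \<in> A} \<subseteq> F"
  have "{wT} \<in> F" using sub wT by blast
  have "wT \<in> A" if "A \<in> F" for A
  proof (rule ccontr)
    assume "wT \<notin> A"
    then have "A \<inter> {wT} = {}" by blast
    with F_Int[OF \<open>A \<in> F\<close> \<open>{wT} \<in> F\<close>] proper show False by simp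
  qed
  with F_sub have "F \<subseteq> {A \<in> up_sets W R. wT \<in> A}" by blast
  with sub show "F = {A \<in> up_sets W R. wT \<in> A}" by (rule antisym[rotated])
next
  show "{A \<in> up_sets W R. wT \<in> A} \<subseteq> up_sets W R" by blast
next
  show "{} \<notin> {A \<in> up_sets W R. wT \<in> A}" by simp
next
  show "\<forall>A\<in>{A \<in> up_sets W R. wT \<in> A}. \<forall>B\<in>up_sets W R. A \<subseteq> B \<longrightarrow> B \<in> {A \<in> up_sets W R. wT \<in> A}"
    by blast
qed

lemma box_top_subset: "box_top W A \<subseteq> W"
  unfolding box_top_def by simp

lemma box_top_in_up_sets: "box_top W A \<in> up_sets W R"
  using field unfolding box_top_def up_sets_def by auto

lemma up_imp_empty: "up_imp W R {} B = W"
  unfolding up_imp_def by auto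

lemma up_imp_W: "up_imp W R A W = W"
  unfolding up_imp_def using field by auto

lemma up_imp_eq_W_iff: "A \<in> up_sets W R \<Longrightarrow> up_imp W R A B = W \<longleftrightarrow> A \<subseteq> B"
  unfolding up_imp_def up_sets_def using field refl by blast

lemma box_top_up_imp_trans:
  assumes A: "A \<in> up_sets W R" and B: "B \<in> up_sets W R"
  shows "box_top W (up_imp W R A B) \<subseteq>
    up_imp W R (box_top W (up_imp W R B C)) (box_top W (up_imp W R A C))"
proof (cases "A \<subseteq> B \<and> B \<subseteq> C")
  case True
  then have "box_top W (up_imp W R A C) = W"
    using up_imp_eq_W_iff[OF A] unfolding box_top_def by auto
  then show ?thesis by (simp add: up_imp_W box_top_subset)
next
  case False
  then have "up_imp W R A B \<noteq> W \<or> up_imp W R B C \<noteq> W"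
    using up_imp_eq_W_iff[OF A] up_imp_eq_W_iff[OF B] by blast
  then consider "box_top W (up_imp W R A B) = {}" | "box_top W (up_imp W R B C) = {}"
    by (metis box_top_def)
  then show ?thesis by cases (simp_all add: up_imp_empty box_top_subset)
qed

lemma box_top_Un:
  assumes "b \<in> W" "\<forall>w\<in>W. R b w" and "A \<in> up_sets W R" "B \<in> up_sets W R"
  shows "box_top W (A \<union> B) \<subseteq> box_top W A \<union> box_top W B"
proof (cases "A \<union> B = W")
  case True
  then have "A = W \<or> B = W"
    using up_set_containing_bottom[OF assms(2)] assms(1,3,4) by blast
  then show ?thesis unfolding box_top_def by auto
qed (simp add: box_top_def)

lemma l5_model_up_sets:
  assumes "b \<in> W" "\<forall>w\<in>W. R b w" and wT: "{wT} \<in> up_sets W R"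
  shows "l5_model (up_sets W R) {A \<in> up_sets W R. wT \<in> A} {} W (up_imp W R) (\<union>) (\<inter>) (box_top W)"
  unfolding l5_model_def hle_Int_iff_subset
proof (intro conjI ballI)
  have "W \<noteq> {}" using wT unfolding up_sets_def by blast
  then show "box_top W A \<in> {A \<in> up_sets W R. wT \<in> A} \<longleftrightarrow> A = W" for A
    using wT box_top_in_up_sets unfolding box_top_def up_sets_def by auto
qed (use heyting_algebra_up_sets ultrafilter_principal_up_sets[OF wT] box_top_in_up_sets
      box_top_up_imp_trans box_top_Un[OF assms(1,2)] in \<open>simp_all add: box_top_def\<close>)

lemma meval_up_sets_eq_extension:
  assumes "frame_assignment W R g"
    and "bottom_world W R \<in> W" and "\<forall>w\<in>W. R (bottom_world W R) w"
  shows "meval {} (up_imp W R) (\<union>) (\<inter>) (box_top W) g \<phi> = extension W R g \<phi>"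
proof (induction \<phi>)
  case (Var x)
  then show ?case using assms(1) unfolding extension_def frame_assignment_def by auto
next
  case (Imp \<phi> \<psi>)
  then show ?case unfolding extension_def up_imp_def using field by auto
next
  case (Box \<phi>)
  have "extension W R g \<phi> = W \<longleftrightarrow> ksat W R g (bottom_world W R) \<phi>"
    using up_set_containing_bottom[OF assms(3) extension_in_up_sets[OF assms(1)]] assms(2)
    unfolding extension_def by blast
  with Box show ?case unfolding extension_def box_top_def by auto
qed (auto simp: extension_def)

end

theorem theorem5p3:
  fixes W :: "'w set" and R :: "'w \<Rightarrow> 'w \<Rightarrow> bool"
    and g :: "'v::countable \<Rightarrow> 'w set" and wT :: 'w
  assumes "l5_frame W R"
    and "frame_assignment W R g"
    and "r_maximal W R wT"
  shows "\<exists>(M :: 'w set set) TRUE fbot ftop fimp for fand fbox (\<gamma> :: 'v \<Rightarrow> 'w set).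
           l5_model M TRUE fbot ftop fimp for fand fbox \<and>
           (\<forall>x. \<gamma> x \<in> M) \<and>
           (\<forall>\<phi>. meval fbot fimp for fand fbox \<gamma> \<phi> \<in> TRUE \<longleftrightarrow> ksat W R g wT \<phi>)"
proof -
  interpret preorder_frame W R using l5_frame_preorder_frame[OF assms(1)] .
  note bottom = l5_frame_bottom_world[OF assms(1)]
  note top = r_maximal_singleton_up_set[OF assms(3)]
  have "g x \<in> up_sets W R" for x
    using assms(2) unfolding frame_assignment_def up_sets_def by blast
  moreover have "meval {} (up_imp W R) (\<union>) (\<inter>) (box_top W) g \<phi> \<in> {A \<in> up_sets W R. wT \<in> A}
      \<longleftrightarrow> ksat W R g wT \<phi>" for \<phi>
    using meval_up_sets_eq_extension[OF assms(2) bottom] extension_in_up_sets[OF assms(2)] top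
    unfolding extension_def up_sets_def by auto
  ultimately show ?thesis
    using l5_model_up_sets[OF bottom top] by blast
qed

end
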